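(* Let $q>2$ be a power of $2$ and let $U$ be an intersecting family of $q^2-\varepsilon$ polynomials over $\mathbb{F}_q$ of degree at most $2$, where $\varepsilon<\frac{q\sqrt{q}}{4}-\frac{q}{8}-\frac{\sqrt{q}}{8}$. Then the graphs of the polynomials in $U$ share a common point.
   Context: The graph of $f\colon\mathbb{F}_q\to\mathbb{F}_q$ is $\{(x,f(x)):x\in\mathbb{F}_q\}$. A set of polynomials over $\mathbb{F}_q$ is intersecting if the graphs of any two of its members share at least one point. *)

theory Defs
  imports Complex_Main "HOL-Computational_Algebra.Polynomial" "HOL-Library.Cardinality"
begin

definition poly_graph :: "'a::comm_ring_1 poly \<Rightarrow> ('a \<times> 'a) set" where
  "poly_graph p = {(x, poly p x) | x. True}"

definition intersecting :: "'a::comm_ring_1 poly set \<Rightarrow> bool" where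
  "intersecting U \<longleftrightarrow> (\<forall>f\<in>U. \<forall>g\<in>U. poly_graph f \<inter> poly_graph g \<noteq> {})"

end

theory Submission
  imports Defs
begin

text \<open>
  Let \<open>q = 2^k\<close>, represent the family by a set \<open>V\<close> of polynomials of degree at most two, and let
  \<open>n(x, y)\<close> be the number of members through \<open>(x, y)\<close>. Two intersecting members with different
  leading and linear coefficients meet twice, since in characteristic two the roots of a quadratic
  \<open>A t\<^sup>2 + B t + C\<close> come in pairs \<open>{t, t + B/A}\<close>; hence the excesses \<open>n(x, f x) - q\<close> along the
  graph of any member add up to at least \<open>2 |V| - q - q\<^sup>2\<close>. Fourier analysis with the additive
  character \<open>(-1)^Tr\<close>, whose kernel is \<open>{u\<^sup>2 + u}\<close>, gives \<open>n(x, y) n(x, y') \<le> q\<^sup>2\<close> for \<open>y \<noteq> y'\<close>, so a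
  vertical line carries at most one rich point (\<open>n > q\<close>). Without a common point, a richest point
  \<open>P\<close> is missed by some member \<open>g\<close>, and counting how the members through \<open>P\<close> meet \<open>g\<close> bounds
  \<open>n(P)\<close> by about \<open>q\<^sup>2/4\<close>. So every member through \<open>P\<close> has several further rich points; but two of
  them together with \<open>P\<close> determine the member, and there are too few pairs of abscissas for that.
\<close>

section \<open>Characteristic two and the Artin--Schreier character\<close>

lemma of_nat_CARD_eq_0: "of_nat CARD('a::{finite,ring_1}) = (0::'a)"
proof -
  have "(\<Sum>x\<in>(UNIV::'a set). x + 1) = (\<Sum>x\<in>UNIV. x)"
    by (rule sum.reindex_bij_witness[of _ "\<lambda>x. x - 1" "\<lambda>x. x + 1"]) auto
  then show ?thesis
    by (simp add: sum.distrib)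
qed

lemma char_two_if_card_power_two:
  assumes "CARD('a::{finite,field}) = 2 ^ k" and "k > 0"
  shows "(2::'a) = 0"
proof -
  have "(2::'a) ^ k = 0"
    using of_nat_CARD_eq_0[where 'a = 'a] assms(1) by simp
  then show ?thesis
    by simp
qed

lemma add_self_char_two:
  assumes "(2::'a::comm_ring_1) = 0"
  shows "x + x = (0::'a)"
  by (metis assms mult_2 mult_zero_left)

lemma minus_char_two:
  assumes "(2::'a::comm_ring_1) = 0"
  shows "- x = (x::'a)"
  by (metis add_self_char_two[OF assms] add_eq_0_iff)

lemma diff_char_two:
  assumes "(2::'a::comm_ring_1) = 0"
  shows "x - y = x + (y::'a)"
  by (metis assms diff_minus_eq_add minus_char_two)

lemma power2_add_char_two:
  assumes "(2::'a::comm_ring_1) = 0"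
  shows "(x + y)\<^sup>2 = x\<^sup>2 + (y\<^sup>2::'a)"
proof -
  have "(x + y)\<^sup>2 = x\<^sup>2 + y\<^sup>2 + 2 * x * y"
    by (simp add: power2_eq_square algebra_simps)
  then show ?thesis
    using assms by simp
qed

lemma power2_eq_iff_char_two:
  assumes "(2::'a::idom) = 0"
  shows "x\<^sup>2 = y\<^sup>2 \<longleftrightarrow> x = (y::'a)"
proof
  assume "x\<^sup>2 = y\<^sup>2"
  then have "(x - y)\<^sup>2 = 0"
    using assms by (simp add: diff_char_two power2_add_char_two add_self_char_two)
  then show "x = y"
    by simp
qed simp

text \<open>In characteristic two, \<open>u \<mapsto> u\<^sup>2 + u\<close> is additive with kernel \<open>{0, 1}\<close>, so its image
  is a subgroup of index two (the elements of absolute trace zero).\<close>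

definition artin_schreier_set :: "'a::comm_ring_1 set" where
  "artin_schreier_set = range (\<lambda>u. u\<^sup>2 + u)"

lemma artin_schreier_set_add:
  assumes "(2::'a::comm_ring_1) = 0"
    and "z \<in> artin_schreier_set" and "w \<in> (artin_schreier_set::'a set)"
  shows "z + w \<in> artin_schreier_set"
proof -
  obtain u v where "z = u\<^sup>2 + u" and "w = v\<^sup>2 + v"
    using assms(2,3) by (auto simp: artin_schreier_set_def)
  then have "z + w = (u + v)\<^sup>2 + (u + v)"
    using assms(1) by (simp add: power2_add_char_two algebra_simps)
  then show ?thesis
    by (auto simp: artin_schreier_set_def)
qed

lemma artin_schreier_eq_iff:
  assumes "(2::'a::idom) = 0"
  shows "v\<^sup>2 + v = u\<^sup>2 + u \<longleftrightarrow> v = u \<or> v = u + (1::'a)"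
proof -
  have "(v - u) * (v - u - 1) = (v\<^sup>2 + v) - (u\<^sup>2 + u) + 2 * (u\<^sup>2 - u * v + u - v)"
    by (simp add: power2_eq_square algebra_simps)
  then have "v\<^sup>2 + v = u\<^sup>2 + u \<longleftrightarrow> (v - u) * (v - u - 1) = 0"
    using assms by simp
  also have "\<dots> \<longleftrightarrow> v = u \<or> v = u + 1"
    by (simp add: diff_diff_eq)
  finally show ?thesis .
qed

lemma card_artin_schreier_set:
  assumes "(2::'a::{finite,field}) = 0"
  shows "2 * card (artin_schreier_set::'a set) = CARD('a)"
proof -
  have fibre: "card {v. v\<^sup>2 + v = h} = 2" if h: "h \<in> artin_schreier_set" for h :: 'a
  proof -
    obtain u where u: "h = u\<^sup>2 + u"
      using h unfolding artin_schreier_set_def by blast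
    have "{v. v\<^sup>2 + v = h} = {u, u + 1}"
      unfolding u artin_schreier_eq_iff[OF assms] by blast
    then show ?thesis
      by simp
  qed
  have "(\<Sum>h\<in>(artin_schreier_set::'a set). \<Sum>v\<in>{v\<in>UNIV. v\<^sup>2 + v = h}. 1) = (\<Sum>v\<in>(UNIV::'a set). 1::nat)"
    by (rule sum.group) (auto simp: artin_schreier_set_def)
  then have "CARD('a) = (\<Sum>h\<in>(artin_schreier_set::'a set). card {v. v\<^sup>2 + v = h})"
    by simp
  also have "\<dots> = 2 * card (artin_schreier_set::'a set)"
    by (simp add: fibre)
  finally show ?thesis
    by simp
qed

lemma artin_schreier_set_add_notin:
  assumes char_two: "(2::'a::{finite,field}) = 0"
    and "z \<notin> artin_schreier_set" and "w \<notin> (artin_schreier_set::'a set)"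
  shows "z + w \<in> artin_schreier_set"
proof (rule ccontr)
  let ?H = "artin_schreier_set::'a set"
  assume "z + w \<notin> ?H"
  have "?H \<inter> (+) z ` ?H = {}"
  proof (rule ccontr)
    assume "?H \<inter> (+) z ` ?H \<noteq> {}"
    then obtain h where "h \<in> ?H" and "z + h \<in> ?H"
      by auto
    then have "(z + h) + h \<in> ?H"
      using artin_schreier_set_add[OF char_two] by blast
    then show False
      using assms(2) char_two by (simp add: add.assoc add_self_char_two)
  qed
  moreover have "card ((+) z ` ?H) = card ?H"
    by (rule card_image) (simp add: inj_on_def)
  ultimately have "card (?H \<union> (+) z ` ?H) = CARD('a)"
    using card_artin_schreier_set[OF char_two] by (simp add: card_Un_disjoint)
  then have "?H \<union> (+) z ` ?H = UNIV"
    by (intro card_eq_UNIV_imp_eq_UNIV) simp_all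
  then have "w \<in> (+) z ` ?H"
    using assms(3) by blast
  then obtain h where "h \<in> ?H" and "w = z + h"
    by auto
  then have "z + w = h"
    using char_two by (simp add: add_self_char_two flip: add.assoc)
  then show False
    using \<open>z + w \<notin> ?H\<close> \<open>h \<in> ?H\<close> by simp
qed

text \<open>On a finite field of characteristic two this is the additive character \<open>z \<mapsto> (-1)^Tr(z)\<close>.\<close>

definition as_char :: "'a::comm_ring_1 \<Rightarrow> real" where
  "as_char z = (if z \<in> artin_schreier_set then 1 else -1)"

lemma as_char_0 [simp]: "as_char (0::'a::comm_ring_1) = 1"
  using rangeI[of "\<lambda>u::'a. u\<^sup>2 + u" 0] by (simp add: as_char_def artin_schreier_set_def)

lemma as_char_mult_self [simp]: "as_char z * as_char z = 1"
  by (simp add: as_char_def)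

lemma as_char_add:
  assumes char_two: "(2::'a::{finite,field}) = 0"
  shows "as_char (z + w) = as_char z * as_char (w::'a)"
proof -
  have mixed: "z + w \<notin> artin_schreier_set"
    if "z \<in> artin_schreier_set" and "w \<notin> artin_schreier_set" for z w :: 'a
    using that artin_schreier_set_add[OF char_two, of z "z + w"] char_two
    by (auto simp: add_self_char_two simp flip: add.assoc)
  show ?thesis
    using artin_schreier_set_add[OF char_two, of z w] artin_schreier_set_add_notin[OF char_two, of z w]
      mixed[of z w] mixed[of w z]
    by (auto simp: as_char_def add.commute[of w z])
qed

lemma sum_as_char:
  assumes "(2::'a::{finite,field}) = 0"
  shows "(\<Sum>z\<in>UNIV. as_char (z::'a)) = 0"
proof -
  let ?H = "artin_schreier_set::'a set"
  have "(\<Sum>z\<in>UNIV. as_char (z::'a)) = (\<Sum>z\<in>?H. 1) + (\<Sum>z\<in>UNIV - ?H. -1)"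
    unfolding as_char_def by (subst sum.If_cases) (auto simp: Int_absorb1 Diff_eq)
  also have "\<dots> = real (card ?H) - real (CARD('a) - card ?H)"
    by (simp add: card_Diff_subset)
  also have "\<dots> = 0"
    using card_artin_schreier_set[OF assms] by simp
  finally show ?thesis .
qed

lemma sum_as_char_scaled:
  assumes "(2::'a::{finite,field}) = 0" and "\<mu> \<noteq> 0"
  shows "(\<Sum>z\<in>UNIV. as_char (\<mu> * z::'a)) = 0"
proof -
  have "(\<Sum>z\<in>UNIV. as_char (\<mu> * z::'a)) = (\<Sum>z\<in>UNIV. as_char (z::'a))"
    by (rule sum.reindex_bij_witness[of _ "\<lambda>z. z / \<mu>" "\<lambda>z. \<mu> * z"]) (use assms(2) in auto)
  then show ?thesis
    using sum_as_char[OF assms(1)] by simp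
qed

lemma sum_as_char_orthogonal:
  assumes char_two: "(2::'a::{finite,field}) = 0"
  shows "(\<Sum>z\<in>UNIV. as_char (l * z) * as_char (l' * z::'a)) = (if l = l' then real CARD('a) else 0)"
proof -
  have "(\<Sum>z\<in>UNIV. as_char (l * z) * as_char (l' * z)) = (\<Sum>z\<in>UNIV. as_char ((l + l') * z))"
    by (simp add: as_char_add[OF char_two] distrib_right)
  also have "\<dots> = (if l = l' then real CARD('a) else 0)"
  proof (cases "l = l'")
    case False
    then have "l + l' \<noteq> 0"
      using diff_char_two[OF char_two, of l l'] by (metis eq_iff_diff_eq_0)
    then show ?thesis
      using False sum_as_char_scaled[OF char_two] by simp
  qed (simp add: add_self_char_two[OF char_two])
  finally show ?thesis .
qed

lemma sum_square_as_char_sum: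
  assumes char_two: "(2::'a::{finite,field}) = 0"
  shows "(\<Sum>z\<in>UNIV. (\<Sum>l\<in>L. c l * as_char (l * z::'a))\<^sup>2) = real CARD('a) * (\<Sum>l\<in>L. (c l)\<^sup>2)"
proof -
  have "(\<Sum>z\<in>UNIV. (\<Sum>l\<in>L. c l * as_char (l * z::'a))\<^sup>2)
      = (\<Sum>l\<in>L. \<Sum>l'\<in>L. c l * c l' * (\<Sum>z\<in>UNIV. as_char (l * z) * as_char (l' * z)))"
    unfolding power2_eq_square sum_product
    by (simp add: sum.swap[of _ UNIV] sum_distrib_left mult_ac)
  also have "\<dots> = (\<Sum>l\<in>L. c l * c l * real CARD('a))"
    by (simp add: sum_as_char_orthogonal[OF char_two] if_distrib[of "\<lambda>t. _ * t"]
        sum.If_cases[where P = "\<lambda>l'. _ = l'"] cong: if_cong)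
  finally show ?thesis
    by (simp add: sum_distrib_left power2_eq_square mult_ac)
qed

text \<open>If the characters \<open>z \<mapsto> as_char (l * z)\<close>, \<open>l \<in> \<Lambda>\<close>, are trivial on \<open>X - X\<close>, then
  \<open>S z = (\<Sum>l\<in>insert 0 \<Lambda>. as_char (l * x\<^sub>0) * as_char (l * z))\<close> equals \<open>card (insert 0 \<Lambda>)\<close> on \<open>X\<close>,
  while its square sums to \<open>q * card (insert 0 \<Lambda>)\<close> over the whole field.\<close>

lemma card_annihilated_le:
  fixes X \<Lambda> :: "'a::{finite,field} set"
  assumes char_two: "(2::'a) = 0" and "0 \<notin> \<Lambda>"
    and trivial: "\<And>l x x'. l \<in> \<Lambda> \<Longrightarrow> x \<in> X \<Longrightarrow> x' \<in> X \<Longrightarrow> as_char (l * (x - x')) = 1"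
  shows "card X * (card \<Lambda> + 1) \<le> CARD('a)"
proof (cases "X = {}")
  case False
  then obtain x\<^sub>0 where x\<^sub>0: "x\<^sub>0 \<in> X"
    by auto
  define L where "L = insert 0 \<Lambda>"
  have card_L: "card L = card \<Lambda> + 1"
    using assms(2) by (simp add: L_def)
  define e where "e l = as_char (l * x\<^sub>0)" for l
  define S where "S z = (\<Sum>l\<in>L. e l * as_char (l * z))" for z
  have S_on_X: "S z = real (card L)" if "z \<in> X" for z
  proof -
    have "as_char (l * z) = e l" if "l \<in> L" for l
    proof (cases "l = 0")
      case False
      then have "as_char (l * (z - x\<^sub>0)) = 1"
        using trivial \<open>z \<in> X\<close> x\<^sub>0 \<open>l \<in> L\<close> by (simp add: L_def)
      moreover have "as_char (l * z) = as_char (l * x\<^sub>0) * as_char (l * (z - x\<^sub>0))"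
        by (simp add: as_char_add[OF char_two, symmetric] algebra_simps)
      ultimately show ?thesis
        by (simp add: e_def)
    qed (simp add: e_def)
    then have "S z = (\<Sum>l\<in>L. e l * e l)"
      unfolding S_def by (intro sum.cong) auto
    then show ?thesis
      by (simp add: e_def)
  qed
  have "real (card X) * (real (card L))\<^sup>2 = (\<Sum>z\<in>X. (S z)\<^sup>2)"
    using S_on_X by simp
  also have "\<dots> \<le> (\<Sum>z\<in>UNIV. (S z)\<^sup>2)"
    by (rule sum_mono2) auto
  also have "\<dots> = real CARD('a) * real (card L)"
    unfolding S_def sum_square_as_char_sum[OF char_two] by (simp add: e_def power2_eq_square)
  finally have "real (card X) * real (card L) \<le> real CARD('a)"
    using card_L by (simp add: power2_eq_square)
  then have "card X * card L \<le> CARD('a)"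
    by (simp only: of_nat_mult[symmetric] of_nat_le_iff)
  then show ?thesis
    by (simp add: card_L)
qed simp

section \<open>Quadratic polynomials\<close>

lemma finite_degree_le: "finite {p::'a::{finite,zero} poly. degree p \<le> n}"
proof -
  have inj: "inj_on (\<lambda>p. map (coeff p) [0..<Suc n]) {p::'a poly. degree p \<le> n}"
  proof (rule inj_onI)
    fix p q
    assume "p \<in> {p::'a poly. degree p \<le> n}" "q \<in> {p::'a poly. degree p \<le> n}"
      and "map (coeff p) [0..<Suc n] = map (coeff q) [0..<Suc n]"
    then have "coeff p i = coeff q i" for i
      by (cases "i \<le> n") (auto simp: coeff_eq_0)
    then show "p = q"
      by (rule poly_eqI)
  qed
  have lists: "finite {xs::'a list. set xs \<subseteq> UNIV \<and> length xs = Suc n}"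
    by (rule finite_lists_length_eq) simp
  show ?thesis
    by (rule inj_on_finite[OF inj _ lists]) auto
qed

lemma poly_degree_le_2:
  fixes p :: "'a::comm_ring_1 poly"
  assumes "degree p \<le> 2"
  shows "poly p x = coeff p 2 * x\<^sup>2 + coeff p 1 * x + coeff p 0"
proof -
  have "poly p x = (\<Sum>i\<le>2. coeff p i * x ^ i)"
    by (subst poly_altdef, rule sum.mono_neutral_left) (use assms in \<open>auto simp: coeff_eq_0\<close>)
  then show ?thesis
    by (simp add: eval_nat_numeral algebra_simps)
qed

lemma poly_eqI_degree_le_2:
  fixes p q :: "'a::zero poly"
  assumes "degree p \<le> 2" and "degree q \<le> 2"
    and "coeff p 0 = coeff q 0" and "coeff p 1 = coeff q 1" and "coeff p 2 = coeff q 2"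
  shows "p = q"
proof (rule poly_eqI)
  fix n
  show "coeff p n = coeff q n"
    using assms by (cases "n \<le> 2") (auto simp: le_Suc_eq eval_nat_numeral coeff_eq_0)
qed

lemma poly_diff_degree_le_2:
  fixes p q :: "'a::comm_ring_1 poly"
  assumes "degree p \<le> 2" and "degree q \<le> 2"
  shows "poly p x - poly q x
    = (coeff p 2 - coeff q 2) * x\<^sup>2 + (coeff p 1 - coeff q 1) * x + (coeff p 0 - coeff q 0)"
  using assms by (simp add: poly_degree_le_2 algebra_simps)

lemma quadratic_root_shift_char_two:
  assumes "(2::'a::field) = 0" and "A \<noteq> 0" and "A * x\<^sup>2 + B * x + C = 0"
  shows "A * (x + B / A)\<^sup>2 + B * (x + B / A) + C = (0::'a)"
proof -
  have "A * (x + B / A)\<^sup>2 + B * (x + B / A) + C = (A * x\<^sup>2 + B * x + C) + 2 * (B * x + B\<^sup>2 / A)"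
    using assms(2) by (simp add: field_simps power2_eq_square)
  then show ?thesis
    using assms(1,3) by simp
qed

lemma quadratic_root_artin_schreier:
  assumes char_two: "(2::'a::field) = 0" and "B \<noteq> 0" and "A * x\<^sup>2 + B * x + C = 0"
  shows "A * C / B\<^sup>2 \<in> (artin_schreier_set::'a set)"
proof -
  have root: "A * x\<^sup>2 + B * x = - C"
    using assms(3) by (simp add: eq_neg_iff_add_eq_0)
  have "(A * x / B)\<^sup>2 + A * x / B = A * (A * x\<^sup>2 + B * x) / B\<^sup>2"
    using assms(2) by (simp add: field_simps power2_eq_square)
  also have "\<dots> = - (A * C / B\<^sup>2)"
    by (simp add: root)
  also have "\<dots> = A * C / B\<^sup>2"
    by (rule minus_char_two[OF char_two])
  finally show ?thesis
    unfolding artin_schreier_set_def by (auto intro!: range_eqI[where x = "A * x / B"])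
qed

lemma eq_if_agree_on_three:
  fixes f g :: "'a::idom poly"
  assumes "degree f \<le> 2" and "degree g \<le> 2"
    and "x\<^sub>1 \<noteq> x\<^sub>2" and "x\<^sub>1 \<noteq> x\<^sub>3" and "x\<^sub>2 \<noteq> x\<^sub>3"
    and "poly f x\<^sub>1 = poly g x\<^sub>1" and "poly f x\<^sub>2 = poly g x\<^sub>2" and "poly f x\<^sub>3 = poly g x\<^sub>3"
  shows "f = g"
  by (rule poly_eqI_degree[where A = "{x\<^sub>1, x\<^sub>2, x\<^sub>3}"]) (use assms in auto)

lemma eq_if_agree_on_two_same_lead:
  fixes f g :: "'a::idom poly"
  assumes "degree f \<le> 2" and "degree g \<le> 2" and "coeff f 2 = coeff g 2"
    and "x \<noteq> x'" and "poly f x = poly g x" and "poly f x' = poly g x'"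
  shows "f = g"
  by (rule poly_eqI_degree_lead_coeff[where n = 2 and A = "{x, x'}"]) (use assms in auto)

lemma eq_if_agree_on_two_same_linear_char_two:
  fixes f g :: "'a::field poly"
  assumes char_two: "(2::'a) = 0"
    and "degree f \<le> 2" and "degree g \<le> 2" and "coeff f 1 = coeff g 1"
    and "x \<noteq> x'" and "poly f x = poly g x" and "poly f x' = poly g x'"
  shows "f = g"
proof -
  define A where "A = coeff f 2 - coeff g 2"
  define C where "C = coeff f 0 - coeff g 0"
  have "poly f y - poly g y = A * y\<^sup>2 + C" for y
    using poly_diff_degree_le_2[OF assms(2,3)] assms(4) by (simp add: A_def C_def)
  then have roots: "A * x\<^sup>2 + C = 0" "A * x'\<^sup>2 + C = 0"
    using assms(6,7) by (metis right_minus_eq)+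
  have "x\<^sup>2 \<noteq> x'\<^sup>2"
    using assms(5) power2_eq_iff_char_two[OF char_two] by blast
  moreover have "A * (x\<^sup>2 - x'\<^sup>2) = (A * x\<^sup>2 + C) - (A * x'\<^sup>2 + C)"
    by (simp add: algebra_simps)
  then have "A * (x\<^sup>2 - x'\<^sup>2) = 0"
    using roots by simp
  ultimately have "A = 0"
    by simp
  then have "C = 0"
    using roots by simp
  show ?thesis
    using \<open>A = 0\<close> \<open>C = 0\<close> assms(2-4) by (intro poly_eqI_degree_le_2) (auto simp: A_def C_def)
qed

lemma two_card_le_sum_add_card:
  fixes f :: "'b \<Rightarrow> nat"
  assumes "finite L" and "E \<subseteq> L"
    and "\<And>h. h \<in> L \<Longrightarrow> 1 \<le> f h" and "\<And>h. h \<in> L - E \<Longrightarrow> 2 \<le> f h"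
  shows "2 * card L \<le> sum f L + card E"
proof -
  have "finite E"
    using assms(1,2) finite_subset by blast
  have "sum f L = sum f E + sum f (L - E)"
    using assms(1,2) by (metis sum.subset_diff add.commute)
  moreover have "card E \<le> sum f E"
    using assms(2,3) sum_mono[of E "\<lambda>_. 1::nat" f] by auto
  moreover have "2 * card (L - E) \<le> sum f (L - E)"
    using assms(4) sum_mono[of "L - E" "\<lambda>_. 2::nat" f] by auto
  moreover have "card L = card E + card (L - E)"
    using assms(1,2) \<open>finite E\<close> by (simp add: card_Diff_subset card_mono)
  ultimately show ?thesis
    by linarith
qed

lemma card_filter_eq_sum: "finite S \<Longrightarrow> card {h \<in> S. Q h} = (\<Sum>h\<in>S. if Q h then 1 else 0)"
  using sum.inter_filter[of S "\<lambda>_. 1::nat" Q] by simp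

lemma sum_card_filter_swap:
  assumes "finite S"
  shows "(\<Sum>x\<in>(UNIV::'a::finite set). card {h \<in> S. P h x}) = (\<Sum>h\<in>S. card {x. P h x})"
proof -
  have "(\<Sum>x\<in>(UNIV::'a set). card {h \<in> S. P h x}) = (\<Sum>x\<in>UNIV. \<Sum>h\<in>S. if P h x then 1 else 0)"
    using assms by (simp add: card_filter_eq_sum)
  also have "\<dots> = (\<Sum>h\<in>S. \<Sum>x\<in>(UNIV::'a set). if P h x then 1 else 0)"
    by (rule sum.swap)
  also have "\<dots> = (\<Sum>h\<in>S. card {x. P h x})"
    using card_filter_eq_sum[of "UNIV::'a set"] by simp
  finally show ?thesis .
qed

lemma sum_const_off_point:
  fixes x\<^sub>0 :: "'b::finite"
  shows "(\<Sum>x\<in>UNIV. if x = x\<^sub>0 then 0 else c) = (CARD('b) - 1) * (c::nat)"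
proof -
  have "(\<Sum>x\<in>UNIV. if x = x\<^sub>0 then 0 else c) = (\<Sum>x\<in>UNIV - {x\<^sub>0}. c)"
    by (rule sum.mono_neutral_cong_right) auto
  then show ?thesis
    by (simp add: card_Diff_subset)
qed

text \<open>The final estimate: \<open>Q\<close> is the field size, \<open>W + Q\<close> the number of members through a
  richest point, \<open>L\<close> the surplus and \<open>k\<close> the number of further rich abscissas of such a member.\<close>

lemma rich_pairs_arith:
  fixes W Q k L :: int
  assumes "3 * W < L" and "1 \<le> W" and "L \<le> (k + 1) * W" and "4 \<le> Q"
    and "Q = 4 \<or> 2 * Q\<^sup>2 \<le> 3 * L"
  shows "(Q - 1) * (Q - 2) < (W + Q) * (k * (k - 1))"
proof -
  have "3 * W < (k + 1) * W"
    using assms(1,3) by linarith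
  then have "3 \<le> k"
    using assms(2) by (simp add: mult_less_cancel_right)
  define P where "P = k * (k - 1)"
  have "3 * 2 \<le> P"
    unfolding P_def using \<open>3 \<le> k\<close> by (intro mult_mono) auto
  show ?thesis
    using assms(5)
  proof
    assume "Q = 4"
    have "5 * 6 \<le> (W + Q) * P"
      using \<open>Q = 4\<close> \<open>3 * 2 \<le> P\<close> assms(2) by (intro mult_mono) auto
    then show ?thesis
      using \<open>Q = 4\<close> by (simp add: P_def)
  next
    assume L: "2 * Q\<^sup>2 \<le> 3 * L"
    show ?thesis
    proof (rule ccontr)
      assume "\<not> ?thesis"
      then have "W * P + Q * P \<le> Q\<^sup>2 - 3 * Q + 2"
        by (simp add: P_def algebra_simps power2_eq_square)
      moreover have "0 < Q * P"
        using assms(4) \<open>3 * 2 \<le> P\<close> by simp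
      ultimately have "W * P < Q\<^sup>2"
        using assms(4) by linarith
      have "2 * Q\<^sup>2 * P \<le> 3 * ((k + 1) * W) * P"
        using L assms(3) \<open>3 * 2 \<le> P\<close> by (intro mult_right_mono) linarith+
      also have "\<dots> = (3 * (k + 1)) * (W * P)"
        by (simp add: algebra_simps)
      also have "\<dots> < (3 * (k + 1)) * Q\<^sup>2"
        using \<open>W * P < Q\<^sup>2\<close> \<open>3 \<le> k\<close> by (intro mult_strict_left_mono) auto
      finally have "(2 * P) * Q\<^sup>2 < (3 * (k + 1)) * Q\<^sup>2"
        by (simp add: algebra_simps)
      then have "2 * P < 3 * (k + 1)"
        using assms(4) by (simp add: mult_less_cancel_right)
      moreover have "2 * P - 3 * (k + 1) = (2 * k + 1) * (k - 3)"
        by (simp add: P_def algebra_simps)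
      moreover have "0 \<le> (2 * k + 1) * (k - 3)"
        using \<open>3 \<le> k\<close> by simp
      ultimately show False
        by linarith
    qed
  qed
qed

section \<open>Intersecting families of quadratics\<close>

locale intersecting_quadratics =
  fixes V :: "'a::{finite,field} poly set"
  assumes char_two: "(2::'a) = 0"
    and degree_le_2: "f \<in> V \<Longrightarrow> degree f \<le> 2"
    and intersecting: "intersecting V"
begin

lemma two_le_card: "2 \<le> CARD('a)"
  using card_mono[of UNIV "{0::'a, 1}"] by simp

lemma finite_V: "finite V"
  by (rule finite_subset[OF _ finite_degree_le[of 2]]) (auto dest: degree_le_2)

lemma meets:
  assumes "f \<in> V" and "g \<in> V"
  obtains x where "poly f x = poly g x"
  using intersecting assms unfolding intersecting_def poly_graph_def by blast

lemma poly_diff: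
  assumes "f \<in> V" and "g \<in> V"
  shows "poly f x - poly g x
    = (coeff f 2 - coeff g 2) * x\<^sup>2 + (coeff f 1 - coeff g 1) * x + (coeff f 0 - coeff g 0)"
  using assms by (intro poly_diff_degree_le_2 degree_le_2)

lemma eq_if_same_lead_linear:
  assumes "f \<in> V" and "g \<in> V" and "coeff f 2 = coeff g 2" and "coeff f 1 = coeff g 1"
  shows "f = g"
proof -
  obtain x where "poly f x = poly g x"
    using meets assms(1,2) .
  then have "coeff f 0 = coeff g 0"
    using poly_diff[OF assms(1,2), of x] assms(3,4) by simp
  then show ?thesis
    using assms by (intro poly_eqI_degree_le_2 degree_le_2)
qed

lemma two_le_card_agree:
  assumes "f \<in> V" and "g \<in> V" and "coeff f 2 \<noteq> coeff g 2" and "coeff f 1 \<noteq> coeff g 1"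
  shows "2 \<le> card {x. poly f x = poly g x}"
proof -
  define A where "A = coeff f 2 - coeff g 2"
  define B where "B = coeff f 1 - coeff g 1"
  define C where "C = coeff f 0 - coeff g 0"
  have agree_iff: "poly f y = poly g y \<longleftrightarrow> A * y\<^sup>2 + B * y + C = 0" for y
    using poly_diff[OF assms(1,2), of y] by (auto simp: A_def B_def C_def)
  have "A \<noteq> 0" and "B \<noteq> 0"
    using assms(3,4) by (auto simp: A_def B_def)
  obtain x where "poly f x = poly g x"
    using meets assms(1,2) .
  then have "A * (x + B / A)\<^sup>2 + B * (x + B / A) + C = 0"
    using quadratic_root_shift_char_two[OF char_two \<open>A \<noteq> 0\<close>] agree_iff by blast
  then have "{x, x + B / A} \<subseteq> {x. poly f x = poly g x}"
    using \<open>poly f x = poly g x\<close> agree_iff by auto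
  moreover have "card {x, x + B / A} = 2"
    using \<open>A \<noteq> 0\<close> \<open>B \<noteq> 0\<close> by simp
  ultimately show ?thesis
    by (metis card_mono finite)
qed

text \<open>Recentred at \<open>x\<close>, \<open>f - g\<close> is \<open>A t\<^sup>2 + B t + (poly f x - poly g x)\<close>, which has a root
  because \<open>f\<close> and \<open>g\<close> meet.\<close>

lemma as_char_diff:
  assumes "f \<in> V" and "g \<in> V" and "coeff f 1 \<noteq> coeff g 1"
  shows "as_char ((coeff f 2 - coeff g 2) * (poly f x - poly g x) / (coeff f 1 - coeff g 1)\<^sup>2) = 1"
proof -
  define A where "A = coeff f 2 - coeff g 2"
  define B where "B = coeff f 1 - coeff g 1"
  define C where "C = coeff f 0 - coeff g 0"
  define d where "d = poly f x - poly g x"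
  have d: "d = A * x\<^sup>2 + B * x + C"
    using poly_diff[OF assms(1,2), of x] by (simp add: A_def B_def C_def d_def)
  obtain x\<^sub>1 where "poly f x\<^sub>1 = poly g x\<^sub>1"
    using meets assms(1,2) .
  then have root: "A * x\<^sub>1\<^sup>2 + B * x\<^sub>1 + C = 0"
    using poly_diff[OF assms(1,2), of x\<^sub>1] by (simp add: A_def B_def C_def)
  have "A * (x\<^sub>1 - x)\<^sup>2 + B * (x\<^sub>1 - x) + d
      = (A * x\<^sub>1\<^sup>2 + B * x\<^sub>1 + C) + 2 * (A * x\<^sup>2 - A * x\<^sub>1 * x)"
    unfolding d by (simp add: power2_eq_square algebra_simps)
  then have "A * (x\<^sub>1 - x)\<^sup>2 + B * (x\<^sub>1 - x) + d = 0"
    using root char_two by simp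
  moreover have "B \<noteq> 0"
    using assms(3) by (simp add: B_def)
  ultimately have "A * d / B\<^sup>2 \<in> artin_schreier_set"
    using quadratic_root_artin_schreier[OF char_two] by blast
  then show ?thesis
    by (simp add: as_char_def A_def B_def d_def)
qed

definition through :: "'a \<Rightarrow> 'a \<Rightarrow> 'a poly set" where
  "through x y = {f \<in> V. poly f x = y}"

lemma through_subset: "through x y \<subseteq> V"
  by (auto simp: through_def)

lemma finite_through: "finite (through x y)"
  using finite_V through_subset by (rule finite_subset[rotated])

lemma card_through_two_le:
  assumes "x \<noteq> x'"
  shows "card (through x y \<inter> through x' y') \<le> CARD('a)"
proof -
  have "inj_on (\<lambda>f. coeff f 2) (through x y \<inter> through x' y')"
    by (rule inj_onI, rule eq_if_agree_on_two_same_lead[OF _ _ _ assms])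
      (auto simp: through_def degree_le_2)
  then show ?thesis
    by (rule card_inj_on_le) auto
qed

lemma card_same_coeff_through_two_le_1:
  assumes "x \<noteq> x'" and "i = 1 \<or> i = 2"
  shows "card {f \<in> through x y \<inter> through x' y'. coeff f i = c} \<le> 1"
proof -
  let ?S = "{f \<in> through x y \<inter> through x' y'. coeff f i = c}"
  have "finite ?S"
    using finite_through by simp
  moreover have "f = g" if "f \<in> ?S" and "g \<in> ?S" for f g
  proof -
    have f: "degree f \<le> 2" "poly f x = y" "poly f x' = y'" "coeff f i = c"
      and g: "degree g \<le> 2" "poly g x = y" "poly g x' = y'" "coeff g i = c"
      using that by (auto simp: through_def degree_le_2)
    show ?thesis
      using assms(2)
    proof
      assume "i = 1"
      show ?thesis
        by (rule eq_if_agree_on_two_same_linear_char_two[OF char_two _ _ _ assms(1)])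
          (use f g \<open>i = 1\<close> in simp_all)
    next
      assume "i = 2"
      show ?thesis
        by (rule eq_if_agree_on_two_same_lead[OF _ _ _ assms(1)]) (use f g \<open>i = 2\<close> in simp_all)
    qed
  qed
  ultimately show ?thesis
    by (simp add: card_le_Suc0_iff_eq)
qed

text \<open>Two members through both points agree nowhere else.\<close>

lemma sum_card_agree_through_two_le:
  assumes "x \<noteq> x'" and "poly h x \<noteq> y" and "poly h x' \<noteq> y'"
  shows "(\<Sum>f\<in>through x y \<inter> through x' y'. card {z. poly f z = poly h z}) \<le> CARD('a) - 2"
proof -
  define L where "L = through x y \<inter> through x' y'"
  define R where "R f = {z. poly f z = poly h z}" for f
  have R_avoids: "R f \<subseteq> UNIV - {x, x'}" if "f \<in> L" for f
    using that assms(2,3) by (auto simp: R_def L_def through_def)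
  have "R f \<inter> R g = {}" if "f \<in> L" and "g \<in> L" and "f \<noteq> g" for f g
  proof (rule ccontr)
    assume "R f \<inter> R g \<noteq> {}"
    then obtain z where z: "poly f z = poly h z" "poly g z = poly h z"
      by (auto simp: R_def)
    then have "z \<noteq> x" and "z \<noteq> x'"
      using R_avoids that(1) by (auto simp: R_def)
    have "f = g"
      by (rule eq_if_agree_on_three[of f g x x' z])
        (use that(1,2) z assms(1) \<open>z \<noteq> x\<close> \<open>z \<noteq> x'\<close> in \<open>auto simp: L_def through_def degree_le_2\<close>)
    then show False
      using that(3) by simp
  qed
  then have "(\<Sum>f\<in>L. card (R f)) = card (\<Union>f\<in>L. R f)"
    using finite_through by (intro card_UN_disjoint[symmetric]) (auto simp: L_def)
  also have "\<dots> \<le> card (UNIV - {x, x'})"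
    using R_avoids by (intro card_mono) auto
  also have "\<dots> = CARD('a) - 2"
    using assms(1) by (simp add: card_Diff_subset)
  finally show ?thesis
    by (simp add: L_def R_def)
qed

text \<open>A member \<open>h\<close> avoiding both points meets every member through them, and meets it twice
  unless the two share a leading or a linear coefficient, which happens at most twice.\<close>

lemma card_through_two_le_half:
  assumes "x \<noteq> x'" and "h \<in> V" and "poly h x \<noteq> y" and "poly h x' \<noteq> y'"
  shows "2 * card (through x y \<inter> through x' y') \<le> CARD('a)"
proof -
  define L where "L = through x y \<inter> through x' y'"
  define E where "E = {f \<in> L. coeff f 2 = coeff h 2} \<union> {f \<in> L. coeff f 1 = coeff h 1}"
  have "card E \<le> card {f \<in> L. coeff f 2 = coeff h 2} + card {f \<in> L. coeff f 1 = coeff h 1}"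
    unfolding E_def by (rule card_Un_le)
  also have "\<dots> \<le> 1 + 1"
    unfolding L_def by (intro add_mono card_same_coeff_through_two_le_1[OF assms(1)]) simp_all
  finally have "card E \<le> 2"
    by simp
  moreover have "2 * card L \<le> (\<Sum>f\<in>L. card {z. poly f z = poly h z}) + card E"
  proof (rule two_card_le_sum_add_card)
    show "finite L"
      using finite_through by (simp add: L_def)
    show "1 \<le> card {z. poly f z = poly h z}" if "f \<in> L" for f
    proof -
      obtain z where "poly f z = poly h z"
        using meets \<open>f \<in> L\<close> assms(2) by (auto simp: L_def through_def)
      then show ?thesis
        by (auto simp: Suc_le_eq card_gt_0_iff)
    qed
    show "2 \<le> card {z. poly f z = poly h z}" if "f \<in> L - E" for f
    proof -
      have "f \<in> V" and "coeff f 2 \<noteq> coeff h 2" and "coeff f 1 \<noteq> coeff h 1"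
        using that by (auto simp: E_def L_def through_def)
      then show ?thesis
        by (rule two_le_card_agree[OF _ assms(2)])
    qed
  qed (auto simp: E_def)
  ultimately show ?thesis
    using sum_card_agree_through_two_le[OF assms(1,3,4)] two_le_card by (simp add: L_def)
qed

definition lead_coeffs :: "'a \<Rightarrow> 'a \<Rightarrow> 'a \<Rightarrow> 'a set" where
  "lead_coeffs x y r = (\<lambda>f. coeff f 2) ` {f \<in> through x y. coeff f 1 = r}"

definition linear_coeffs :: "'a \<Rightarrow> 'a \<Rightarrow> 'a set" where
  "linear_coeffs x y = (\<lambda>f. coeff f 1) ` through x y"

lemma card_through_eq_sum_lead_coeffs:
  "card (through x y) = (\<Sum>r\<in>linear_coeffs x y. card (lead_coeffs x y r))"
proof -
  have "(\<Sum>r\<in>linear_coeffs x y. \<Sum>f\<in>{f \<in> through x y. coeff f 1 = r}. 1) = (\<Sum>f\<in>through x y. 1::nat)"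
    unfolding linear_coeffs_def by (rule sum.group) (auto simp: finite_through)
  then have "card (through x y) = (\<Sum>r\<in>linear_coeffs x y. card {f \<in> through x y. coeff f 1 = r})"
    by simp
  also have "\<dots> = (\<Sum>r\<in>linear_coeffs x y. card (lead_coeffs x y r))"
  proof (rule sum.cong[OF refl])
    fix r
    have "inj_on (\<lambda>f. coeff f 2) {f \<in> through x y. coeff f 1 = r}"
      by (rule inj_onI, rule eq_if_same_lead_linear) (auto simp: through_def)
    then show "card {f \<in> through x y. coeff f 1 = r} = card (lead_coeffs x y r)"
      by (simp add: lead_coeffs_def card_image)
  qed
  finally show ?thesis .
qed

text \<open>Differences of leading coefficients at a fixed linear coefficient \<open>r\<close> through \<open>(x, y)\<close>
  are annihilated by the characters \<open>as_char ((y - y') / (r - s)\<^sup>2 * _)\<close>, \<open>s \<noteq> r\<close> ranging over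
  the linear coefficients through \<open>(x, y')\<close>: apply \<open>as_char_diff\<close> to both against one member
  through \<open>(x, y')\<close>.\<close>

lemma as_char_lead_coeffs_diff:
  assumes "a \<in> lead_coeffs x y r" and "a' \<in> lead_coeffs x y r" and "s \<in> linear_coeffs x y' - {r}"
  shows "as_char ((y - y') / (r - s)\<^sup>2 * (a - a')) = 1"
proof -
  obtain g f f' where g: "g \<in> through x y'" "coeff g 1 = s"
    and f: "f \<in> through x y" "coeff f 1 = r" "a = coeff f 2"
    and f': "f' \<in> through x y" "coeff f' 1 = r" "a' = coeff f' 2"
    using assms by (auto simp: linear_coeffs_def lead_coeffs_def)
  define l where "l = (y - y') / (r - s)\<^sup>2"
  have "coeff g 1 \<noteq> r"
    using assms(3) g(2) by simp
  have as_char_1: "as_char (l * (coeff h 2 - coeff g 2)) = 1"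
    if "h \<in> through x y" and "coeff h 1 = r" for h
    using as_char_diff[of h g x] that g \<open>coeff g 1 \<noteq> r\<close> by (simp add: through_def l_def mult.commute)
  have "l * (a - a') = l * (a - coeff g 2) + l * (a' - coeff g 2)"
    using char_two by (simp add: algebra_simps diff_char_two)
  then show ?thesis
    using as_char_1[OF f(1,2)] as_char_1[OF f'(1,2)]
    by (simp add: as_char_add[OF char_two] f f' l_def)
qed

lemma card_lead_coeffs_mult_le:
  assumes "y \<noteq> y'"
  shows "card (lead_coeffs x y r) * card (linear_coeffs x y') \<le> CARD('a)"
proof -
  define \<Lambda> where "\<Lambda> = (\<lambda>s. (y - y') / (r - s)\<^sup>2) ` (linear_coeffs x y' - {r})"
  have "0 \<notin> \<Lambda>"
    using assms by (auto simp: \<Lambda>_def)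
  have "inj_on (\<lambda>s. (y - y') / (r - s)\<^sup>2) (linear_coeffs x y' - {r})"
  proof (rule inj_onI)
    fix s s'
    assume "s \<in> linear_coeffs x y' - {r}" "s' \<in> linear_coeffs x y' - {r}"
      and "(y - y') / (r - s)\<^sup>2 = (y - y') / (r - s')\<^sup>2"
    then have "(r - s)\<^sup>2 = (r - s')\<^sup>2"
      using assms by (simp add: field_simps)
    then show "s = s'"
      using power2_eq_iff_char_two[OF char_two] by simp
  qed
  then have "card \<Lambda> = card (linear_coeffs x y' - {r})"
    by (simp add: \<Lambda>_def card_image)
  moreover have "card (linear_coeffs x y') \<le> card (linear_coeffs x y' - {r}) + 1"
    using finite_through[of x y']
    by (cases "r \<in> linear_coeffs x y'") (simp_all add: card_Suc_Diff1 linear_coeffs_def)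
  moreover have "card (lead_coeffs x y r) * (card \<Lambda> + 1) \<le> CARD('a)"
  proof (rule card_annihilated_le[OF char_two \<open>0 \<notin> \<Lambda>\<close>])
    fix l a a'
    assume "l \<in> \<Lambda>" and "a \<in> lead_coeffs x y r" and "a' \<in> lead_coeffs x y r"
    moreover obtain s where "s \<in> linear_coeffs x y' - {r}" and "l = (y - y') / (r - s)\<^sup>2"
      using \<open>l \<in> \<Lambda>\<close> by (auto simp: \<Lambda>_def)
    ultimately show "as_char (l * (a - a')) = 1"
      using as_char_lead_coeffs_diff by simp
  qed
  ultimately show ?thesis
    by (metis le_trans mult_le_mono2)
qed

lemma card_through_mult_card_linear_coeffs_le:
  assumes "y \<noteq> y'"
  shows "card (through x y) * card (linear_coeffs x y') \<le> CARD('a) * card (linear_coeffs x y)"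
proof -
  have "card (through x y) * card (linear_coeffs x y')
      = (\<Sum>r\<in>linear_coeffs x y. card (lead_coeffs x y r) * card (linear_coeffs x y'))"
    by (simp add: card_through_eq_sum_lead_coeffs sum_distrib_right)
  also have "\<dots> \<le> (\<Sum>r\<in>linear_coeffs x y. CARD('a))"
    by (intro sum_mono card_lead_coeffs_mult_le assms)
  finally show ?thesis
    by (simp add: mult.commute)
qed

lemma card_through_mult_card_through_le:
  assumes "y \<noteq> y'"
  shows "card (through x y) * card (through x y') \<le> CARD('a)\<^sup>2"
proof (cases "linear_coeffs x y = {} \<or> linear_coeffs x y' = {}")
  case True
  then show ?thesis
    by (auto simp: linear_coeffs_def finite_through)
next
  case False
  then have pos: "0 < card (linear_coeffs x y) * card (linear_coeffs x y')"
    using finite_through by (auto simp: linear_coeffs_def card_gt_0_iff)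
  have "(card (through x y) * card (through x y')) * (card (linear_coeffs x y) * card (linear_coeffs x y'))
      = (card (through x y) * card (linear_coeffs x y')) * (card (through x y') * card (linear_coeffs x y))"
    by (simp add: mult_ac)
  also have "\<dots> \<le> (CARD('a) * card (linear_coeffs x y)) * (CARD('a) * card (linear_coeffs x y'))"
    using assms by (intro mult_le_mono card_through_mult_card_linear_coeffs_le) auto
  also have "\<dots> = CARD('a)\<^sup>2 * (card (linear_coeffs x y) * card (linear_coeffs x y'))"
    by (simp add: power2_eq_square mult_ac)
  finally show ?thesis
    using pos by simp
qed

definition rich :: "'a \<Rightarrow> 'a \<Rightarrow> bool" where
  "rich x y \<longleftrightarrow> CARD('a) < card (through x y)"

lemma rich_point_unique:
  assumes "rich x y" and "rich x y'"
  shows "y = y'"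
proof (rule ccontr)
  assume "y \<noteq> y'"
  have "CARD('a) * CARD('a) < card (through x y) * card (through x y')"
    using assms by (intro mult_strict_mono) (auto simp: rich_def)
  moreover have "card (through x y) * card (through x y') \<le> CARD('a) * CARD('a)"
    using card_through_mult_card_through_le[OF \<open>y \<noteq> y'\<close>, of x] by (simp add: power2_eq_square)
  ultimately show False
    by linarith
qed

lemma card_same_lead_or_linear_le:
  assumes "g \<in> V"
  shows "card {h \<in> V - {g}. coeff h 2 = coeff g 2 \<or> coeff h 1 = coeff g 1} \<le> 2 * (CARD('a) - 1)"
proof -
  define T\<^sub>2 where "T\<^sub>2 = {h \<in> V - {g}. coeff h 2 = coeff g 2}"
  define T\<^sub>1 where "T\<^sub>1 = {h \<in> V - {g}. coeff h 1 = coeff g 1}"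
  have "inj_on (\<lambda>h. coeff h 1) T\<^sub>2"
    by (rule inj_onI, rule eq_if_same_lead_linear) (auto simp: T\<^sub>2_def)
  moreover have "(\<lambda>h. coeff h 1) ` T\<^sub>2 \<subseteq> UNIV - {coeff g 1}"
    using eq_if_same_lead_linear[OF _ assms] by (auto simp: T\<^sub>2_def)
  ultimately have "card T\<^sub>2 \<le> CARD('a) - 1"
    using card_inj_on_le[of _ T\<^sub>2 "UNIV - {coeff g 1}"] by (simp add: card_Diff_subset)
  have "inj_on (\<lambda>h. coeff h 2) T\<^sub>1"
    by (rule inj_onI, rule eq_if_same_lead_linear) (auto simp: T\<^sub>1_def)
  moreover have "(\<lambda>h. coeff h 2) ` T\<^sub>1 \<subseteq> UNIV - {coeff g 2}"
    using eq_if_same_lead_linear[OF _ assms] by (auto simp: T\<^sub>1_def)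
  ultimately have "card T\<^sub>1 \<le> CARD('a) - 1"
    using card_inj_on_le[of _ T\<^sub>1 "UNIV - {coeff g 2}"] by (simp add: card_Diff_subset)
  have "{h \<in> V - {g}. coeff h 2 = coeff g 2 \<or> coeff h 1 = coeff g 1} = T\<^sub>2 \<union> T\<^sub>1"
    by (auto simp: T\<^sub>1_def T\<^sub>2_def)
  then show ?thesis
    using card_Un_le[of T\<^sub>2 T\<^sub>1] \<open>card T\<^sub>1 \<le> _\<close> \<open>card T\<^sub>2 \<le> _\<close> by simp
qed

text \<open>Every \<open>h\<close> meets \<open>g\<close>, and meets it twice unless \<open>h\<close> shares the leading or the linear
  coefficient with \<open>g\<close>, which happens for at most \<open>2 (q - 1)\<close> members.\<close>

lemma two_card_le_sum_card_agree:
  assumes "g \<in> V" and "S \<subseteq> V - {g}"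
  shows "2 * card S \<le> (\<Sum>h\<in>S. card {x. poly h x = poly g x}) + 2 * (CARD('a) - 1)"
proof -
  define E where "E = {h \<in> S. coeff h 2 = coeff g 2 \<or> coeff h 1 = coeff g 1}"
  have "card E \<le> card {h \<in> V - {g}. coeff h 2 = coeff g 2 \<or> coeff h 1 = coeff g 1}"
    by (rule card_mono, rule finite_subset[OF _ finite_V]) (use assms(2) in \<open>auto simp: E_def\<close>)
  also have "\<dots> \<le> 2 * (CARD('a) - 1)"
    using assms(1) by (rule card_same_lead_or_linear_le)
  finally have "card E \<le> 2 * (CARD('a) - 1)" .
  moreover have "2 * card S \<le> (\<Sum>h\<in>S. card {x. poly h x = poly g x}) + card E"
  proof (rule two_card_le_sum_add_card)
    show "finite S"
      by (rule finite_subset[OF assms(2)]) (simp add: finite_V)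
    show "1 \<le> card {x. poly h x = poly g x}" if "h \<in> S" for h
    proof -
      have "h \<in> V"
        using that assms(2) by auto
      then obtain x where "poly h x = poly g x"
        using meets assms(1) by blast
      then show ?thesis
        by (auto simp: Suc_le_eq card_gt_0_iff)
    qed
    show "2 \<le> card {x. poly h x = poly g x}" if "h \<in> S - E" for h
      by (rule two_le_card_agree[OF _ assms(1)]) (use that assms(2) in \<open>auto simp: E_def\<close>)
  qed (auto simp: E_def)
  ultimately show ?thesis
    by linarith
qed

lemma two_card_le_sum_card_through_graph:
  assumes "f \<in> V"
  shows "2 * card V \<le> (\<Sum>x\<in>UNIV. card (through x (poly f x))) + CARD('a)"
proof -
  have "(\<Sum>x\<in>UNIV. card (through x (poly f x))) = (\<Sum>h\<in>V. card {x. poly h x = poly f x})"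
    unfolding through_def by (rule sum_card_filter_swap[OF finite_V])
  also have "\<dots> = CARD('a) + (\<Sum>h\<in>V - {f}. card {x. poly h x = poly f x})"
    using assms finite_V by (simp add: sum.remove)
  finally have "(\<Sum>x\<in>UNIV. card (through x (poly f x)))
      = CARD('a) + (\<Sum>h\<in>V - {f}. card {x. poly h x = poly f x})" .
  moreover have "2 * card (V - {f}) \<le> (\<Sum>h\<in>V - {f}. card {x. poly h x = poly f x}) + 2 * (CARD('a) - 1)"
    using assms by (rule two_card_le_sum_card_agree) simp
  moreover have "card (V - {f}) = card V - 1" and "1 \<le> card V"
    using assms finite_V by (auto simp: Suc_le_eq card_gt_0_iff)
  moreover have "1 \<le> CARD('a)"
    by (simp add: Suc_le_eq)
  ultimately show ?thesis
    by linarith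
qed

lemma card_through_inter_graph_le:
  assumes "poly g x\<^sub>0 \<noteq> y\<^sub>0"
  shows "card (through x\<^sub>0 y\<^sub>0 \<inter> through x (poly g x)) \<le> (if x = x\<^sub>0 then 0 else CARD('a))"
proof (cases "x = x\<^sub>0")
  case True
  then have "through x\<^sub>0 y\<^sub>0 \<inter> through x (poly g x) = {}"
    using assms by (auto simp: through_def)
  then show ?thesis
    by simp
qed (simp add: card_through_two_le)

lemma two_card_through_le_sum:
  assumes "g \<in> V" and "poly g x\<^sub>0 \<noteq> y\<^sub>0"
  shows "2 * card (through x\<^sub>0 y\<^sub>0)
    \<le> (\<Sum>x\<in>UNIV. card (through x\<^sub>0 y\<^sub>0 \<inter> through x (poly g x))) + 2 * (CARD('a) - 1)"
proof -
  have "through x\<^sub>0 y\<^sub>0 \<inter> through x (poly g x) = {h \<in> through x\<^sub>0 y\<^sub>0. poly h x = poly g x}" for x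
    by (auto simp: through_def)
  then have "(\<Sum>x\<in>UNIV. card (through x\<^sub>0 y\<^sub>0 \<inter> through x (poly g x)))
      = (\<Sum>h\<in>through x\<^sub>0 y\<^sub>0. card {x. poly h x = poly g x})"
    by (simp add: sum_card_filter_swap[OF finite_through])
  moreover have "through x\<^sub>0 y\<^sub>0 \<subseteq> V - {g}"
    using assms(2) by (auto simp: through_def)
  ultimately show ?thesis
    using two_card_le_sum_card_agree[OF assms(1)] by simp
qed

lemma two_card_through_le_crude:
  assumes "g \<in> V" and "poly g x\<^sub>0 \<noteq> y\<^sub>0"
  shows "2 * card (through x\<^sub>0 y\<^sub>0) \<le> (CARD('a) - 1) * CARD('a) + 2 * (CARD('a) - 1)"
proof -
  have "(\<Sum>x\<in>UNIV. card (through x\<^sub>0 y\<^sub>0 \<inter> through x (poly g x)))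
      \<le> (\<Sum>x\<in>UNIV. if x = x\<^sub>0 then 0 else CARD('a))"
    using assms(2) by (intro sum_mono card_through_inter_graph_le)
  then show ?thesis
    using two_card_through_le_sum[OF assms] by (simp add: sum_const_off_point)
qed

text \<open>If two verticals \<open>x\<^sub>1, x\<^sub>2\<close> had every member outside \<open>through x\<^sub>0 y\<^sub>0\<close> passing through
  \<open>(x\<^sub>i, poly g x\<^sub>i)\<close>, all these members would lie on a common pair of points.\<close>

lemma card_covering_abscissas_le_1:
  assumes large: "CARD('a)\<^sup>2 + 3 * CARD('a) < 2 * card V + 2"
    and "g \<in> V" and "poly g x\<^sub>0 \<noteq> y\<^sub>0"
  shows "card {x. x \<noteq> x\<^sub>0 \<and> V \<subseteq> through x\<^sub>0 y\<^sub>0 \<union> through x (poly g x)} \<le> 1"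
proof (rule ccontr)
  let ?B = "{x. x \<noteq> x\<^sub>0 \<and> V \<subseteq> through x\<^sub>0 y\<^sub>0 \<union> through x (poly g x)}"
  assume "\<not> card ?B \<le> 1"
  then have "\<not> (\<forall>x\<^sub>1\<in>?B. \<forall>x\<^sub>2\<in>?B. x\<^sub>1 = x\<^sub>2)"
    by (simp add: card_le_Suc0_iff_eq)
  then obtain x\<^sub>1 x\<^sub>2 where "x\<^sub>1 \<in> ?B" and "x\<^sub>2 \<in> ?B" and "x\<^sub>1 \<noteq> x\<^sub>2"
    by blast
  then have "V - through x\<^sub>0 y\<^sub>0 \<subseteq> through x\<^sub>1 (poly g x\<^sub>1) \<inter> through x\<^sub>2 (poly g x\<^sub>2)"
    by blast
  then have "card (V - through x\<^sub>0 y\<^sub>0) \<le> card (through x\<^sub>1 (poly g x\<^sub>1) \<inter> through x\<^sub>2 (poly g x\<^sub>2))"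
    by (intro card_mono) (simp_all add: finite_through)
  also have "\<dots> \<le> CARD('a)"
    using \<open>x\<^sub>1 \<noteq> x\<^sub>2\<close> by (rule card_through_two_le)
  finally have "card V \<le> card (through x\<^sub>0 y\<^sub>0) + CARD('a)"
    using through_subset finite_through by (simp add: card_Diff_subset)
  moreover have "card (through x\<^sub>0 y\<^sub>0) \<le> card V"
    using through_subset finite_V by (rule card_mono[rotated])
  moreover have "2 * (CARD('a) - 1) + 2 = 2 * CARD('a)"
    using two_le_card by arith
  ultimately have "2 * card V + 2 \<le> (CARD('a) - 1) * CARD('a) + 2 * CARD('a) + 2 * CARD('a)"
    using two_card_through_le_crude[OF assms(2,3)] by linarith
  also have "\<dots> = CARD('a)\<^sup>2 + 3 * CARD('a)"
    by (simp add: power2_eq_square diff_mult_distrib)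
  finally show False
    using large by linarith
qed

text \<open>Count the members through \<open>(x\<^sub>0, y\<^sub>0)\<close> that meet \<open>g\<close> above \<open>x\<close>: there are none for
  \<open>x = x\<^sub>0\<close>, at most \<open>q\<close>, and at most \<open>q / 2\<close> unless \<open>x\<close> is the one abscissa of
  \<open>card_covering_abscissas_le_1\<close>.\<close>

lemma four_card_through_le:
  assumes large: "CARD('a)\<^sup>2 + 3 * CARD('a) < 2 * card V + 2"
    and g: "g \<in> V" "poly g x\<^sub>0 \<noteq> y\<^sub>0"
  shows "4 * card (through x\<^sub>0 y\<^sub>0) + 4 \<le> CARD('a)\<^sup>2 + 4 * CARD('a)"
proof -
  define B where "B = {x. x \<noteq> x\<^sub>0 \<and> V \<subseteq> through x\<^sub>0 y\<^sub>0 \<union> through x (poly g x)}"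
  define t where "t x = card (through x\<^sub>0 y\<^sub>0 \<inter> through x (poly g x))" for x
  have "2 * t x \<le> (if x = x\<^sub>0 then 0 else CARD('a)) + (if x \<in> B then CARD('a) else 0)" for x
  proof (cases "x = x\<^sub>0 \<or> x \<in> B")
    case True
    then show ?thesis
      using card_through_inter_graph_le[OF g(2), of x] by (auto simp: t_def B_def)
  next
    case False
    then obtain f where "f \<in> V" "poly f x\<^sub>0 \<noteq> y\<^sub>0" "poly f x \<noteq> poly g x"
      by (auto simp: B_def through_def)
    then have "2 * t x \<le> CARD('a)"
      unfolding t_def using False by (intro card_through_two_le_half) auto
    then show ?thesis
      using False by simp
  qed
  then have "2 * (\<Sum>x\<in>UNIV. t x)
      \<le> (\<Sum>x\<in>UNIV. if x = x\<^sub>0 then 0 else CARD('a)) + (\<Sum>x\<in>UNIV. if x \<in> B then CARD('a) else 0)"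
    by (simp add: sum_distrib_left flip: sum.distrib) (intro sum_mono)
  also have "\<dots> = (CARD('a) - 1) * CARD('a) + card B * CARD('a)"
    by (simp add: sum_const_off_point sum.If_cases)
  also have "\<dots> \<le> (CARD('a) - 1) * CARD('a) + 1 * CARD('a)"
    using card_covering_abscissas_le_1[OF large g] by (simp add: B_def)
  also have "\<dots> = CARD('a)\<^sup>2"
    using two_le_card by (simp add: power2_eq_square diff_mult_distrib)
  finally have "2 * (\<Sum>x\<in>UNIV. t x) \<le> CARD('a)\<^sup>2" .
  then show ?thesis
    using two_card_through_le_sum[OF g] two_le_card unfolding t_def by linarith
qed

definition rich_abscissas :: "'a poly \<Rightarrow> 'a set" where
  "rich_abscissas f = {x. rich x (poly f x)}"

text \<open>A rich point is the only one on its vertical, so two rich abscissas \<open>x, x' \<noteq> x\<^sub>0\<close> of a member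
  \<open>f\<close> through \<open>(x\<^sub>0, y\<^sub>0)\<close> determine \<open>f\<close> as the quadratic through three known points.\<close>

lemma sum_card_rich_pairs_le:
  "(\<Sum>f\<in>through x\<^sub>0 y\<^sub>0. card (rich_abscissas f - {x\<^sub>0}) * (card (rich_abscissas f - {x\<^sub>0}) - 1))
    \<le> (CARD('a) - 1) * (CARD('a) - 2)"
proof -
  define K where "K f = rich_abscissas f - {x\<^sub>0}" for f
  define S where "S = Sigma (through x\<^sub>0 y\<^sub>0) (\<lambda>f. Sigma (K f) (\<lambda>x. K f - {x}))"
  define T where "T = Sigma (UNIV - {x\<^sub>0}) (\<lambda>x. UNIV - {x\<^sub>0, x})"
  have "card S = (\<Sum>f\<in>through x\<^sub>0 y\<^sub>0. card (K f) * (card (K f) - 1))"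
    unfolding S_def using finite_through by (simp add: card_SigmaI)
  moreover have "card T = (CARD('a) - 1) * (CARD('a) - 2)"
    unfolding T_def by (simp add: card_SigmaI card_Diff_subset numeral_2_eq_2)
  moreover have "card S \<le> card T"
  proof (rule card_inj_on_le)
    show "inj_on snd S"
    proof (rule inj_onI)
      fix p p'
      assume "p \<in> S" and "p' \<in> S" and "snd p = snd p'"
      then obtain f f' x x' where p: "p = (f, x, x')" and p': "p' = (f', x, x')"
        by (metis prod.collapse)
      have f: "f \<in> through x\<^sub>0 y\<^sub>0" "x \<in> K f" "x' \<in> K f" "x' \<noteq> x"
        and f': "f' \<in> through x\<^sub>0 y\<^sub>0" "x \<in> K f'" "x' \<in> K f'"
        using \<open>p \<in> S\<close> \<open>p' \<in> S\<close> by (auto simp: S_def p p')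
      have "poly f z = poly f' z" if "z \<in> {x, x'}" for z
        by (rule rich_point_unique[where x = z])
          (use that f f' in \<open>auto simp: K_def rich_abscissas_def\<close>)
      then have "f = f'"
        using f f' by (intro eq_if_agree_on_three[of f f' x\<^sub>0 x x'])
          (auto simp: K_def through_def degree_le_2)
      then show "p = p'"
        by (simp add: p p')
    qed
    show "snd ` S \<subseteq> T"
      by (auto simp: S_def T_def K_def)
  qed simp
  ultimately show ?thesis
    by (simp add: K_def)
qed

text \<open>By \<open>two_card_le_sum_card_through_graph\<close>, a lower bound for the total excess over \<open>q\<close> of
  the numbers of members through the points of the graph of any member.\<close>

definition surplus :: int where
  "surplus = 2 * int (card V) - int CARD('a) - (int CARD('a))\<^sup>2"

lemma surplus_le_sum_excess:
  assumes "f \<in> V"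
  shows "surplus \<le> (\<Sum>x\<in>rich_abscissas f. int (card (through x (poly f x))) - int CARD('a))"
proof -
  define e where "e x = int (card (through x (poly f x))) - int CARD('a)" for x
  have "2 * int (card V) \<le> (\<Sum>x\<in>UNIV. int (card (through x (poly f x)))) + int CARD('a)"
    using two_card_le_sum_card_through_graph[OF assms] by (simp flip: of_nat_sum)
  then have "surplus \<le> (\<Sum>x\<in>UNIV. e x)"
    by (simp add: surplus_def e_def sum_subtractf power2_eq_square)
  also have "\<dots> = (\<Sum>x\<in>UNIV - rich_abscissas f. e x) + (\<Sum>x\<in>rich_abscissas f. e x)"
    by (rule sum.subset_diff) auto
  also have "\<dots> \<le> (\<Sum>x\<in>rich_abscissas f. e x)"
    using sum_nonpos[of "UNIV - rich_abscissas f" e] by (simp add: e_def rich_abscissas_def rich_def)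
  finally show ?thesis
    by (simp add: e_def)
qed

lemma rich_point_exists:
  assumes "0 < surplus" and "V \<noteq> {}"
  obtains x y where "rich x y"
proof -
  obtain f where "f \<in> V"
    using assms(2) by blast
  then have "rich_abscissas f \<noteq> {}"
    using surplus_le_sum_excess assms(1) by fastforce
  then show ?thesis
    using that by (auto simp: rich_abscissas_def)
qed

lemma richest_point_exists:
  assumes "rich x y"
  obtains x\<^sub>0 y\<^sub>0 where "rich x\<^sub>0 y\<^sub>0"
    and "\<And>x y. rich x y \<Longrightarrow> card (through x y) \<le> card (through x\<^sub>0 y\<^sub>0)"
proof -
  have "card (through x y) < card V + 1" for x y
    by (simp add: less_Suc_eq_le card_mono[OF finite_V through_subset])
  then obtain p where "rich (fst p) (snd p)"
    and "\<And>p'. rich (fst p') (snd p') \<Longrightarrow> card (through (fst p') (snd p')) \<le> card (through (fst p) (snd p))"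
    using Lattices_Big.ex_has_greatest_nat[of "\<lambda>p. rich (fst p) (snd p)" "(x, y)"
        "\<lambda>p. card (through (fst p) (snd p))" "card V + 1"] assms
    by auto
  then show ?thesis
    using that[of "fst p" "snd p"] by (metis fst_conv snd_conv)
qed

lemma surplus_le_excess_of_richest:
  assumes "rich x\<^sub>0 y\<^sub>0"
    and richest: "\<And>x y. rich x y \<Longrightarrow> card (through x y) \<le> card (through x\<^sub>0 y\<^sub>0)"
    and "f \<in> through x\<^sub>0 y\<^sub>0"
  shows "surplus
    \<le> (int (card (rich_abscissas f - {x\<^sub>0})) + 1) * (int (card (through x\<^sub>0 y\<^sub>0)) - int CARD('a))"
proof -
  have "x\<^sub>0 \<in> rich_abscissas f" and "f \<in> V"
    using assms(1,3) by (auto simp: rich_abscissas_def through_def)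
  have "surplus \<le> (\<Sum>x\<in>rich_abscissas f. int (card (through x (poly f x))) - int CARD('a))"
    using surplus_le_sum_excess[OF \<open>f \<in> V\<close>] .
  also have "\<dots> \<le> (\<Sum>x\<in>rich_abscissas f. int (card (through x\<^sub>0 y\<^sub>0)) - int CARD('a))"
    using richest by (intro sum_mono) (simp add: rich_abscissas_def)
  also have "\<dots> = int (card (rich_abscissas f)) * (int (card (through x\<^sub>0 y\<^sub>0)) - int CARD('a))"
    by simp
  also have "card (rich_abscissas f) = card (rich_abscissas f - {x\<^sub>0}) + 1"
    using card_Suc_Diff1[of "rich_abscissas f" x\<^sub>0] \<open>x\<^sub>0 \<in> rich_abscissas f\<close> by simp
  finally show ?thesis
    by (simp add: add.commute)
qed


lemma rich_pairs_lower:
  assumes "4 \<le> CARD('a)" and "CARD('a) = 4 \<or> 2 * (int CARD('a))\<^sup>2 \<le> 3 * surplus"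
    and "rich x\<^sub>0 y\<^sub>0"
    and richest: "\<And>x y. rich x y \<Longrightarrow> card (through x y) \<le> card (through x\<^sub>0 y\<^sub>0)"
    and "3 * (int (card (through x\<^sub>0 y\<^sub>0)) - int CARD('a)) < surplus"
    and "f \<in> through x\<^sub>0 y\<^sub>0"
  shows "(CARD('a) - 1) * (CARD('a) - 2)
    < card (through x\<^sub>0 y\<^sub>0) * (card (rich_abscissas f - {x\<^sub>0}) * (card (rich_abscissas f - {x\<^sub>0}) - 1))"
proof -
  define k where "k = card (rich_abscissas f - {x\<^sub>0})"
  define M where "M = card (through x\<^sub>0 y\<^sub>0)"
  have "(int CARD('a) - 1) * (int CARD('a) - 2) < (int M - int CARD('a) + int CARD('a)) * (int k * (int k - 1))"
  proof (rule rich_pairs_arith)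
    show "1 \<le> int M - int CARD('a)"
      using \<open>rich x\<^sub>0 y\<^sub>0\<close> by (simp add: rich_def M_def)
    show "surplus \<le> (int k + 1) * (int M - int CARD('a))"
      unfolding k_def M_def by (rule surplus_le_excess_of_richest[OF assms(3) richest assms(6)])
  qed (use assms(1,2,5) in \<open>auto simp: M_def\<close>)
  then have less: "(int CARD('a) - 1) * (int CARD('a) - 2) < int M * (int k * (int k - 1))"
    by simp
  have "int (M * (k * (k - 1))) = int M * (int k * (int k - 1))"
    by (cases k) (simp_all add: algebra_simps)
  moreover have "int ((CARD('a) - 1) * (CARD('a) - 2)) = (int CARD('a) - 1) * (int CARD('a) - 2)"
    using assms(1) by (simp add: of_nat_diff)
  ultimately have "int ((CARD('a) - 1) * (CARD('a) - 2)) < int (M * (k * (k - 1)))"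
    using less by (simp only:)
  then show ?thesis
    by (simp only: of_nat_less_iff k_def M_def)
qed

lemma surplus_bounds:
  assumes "4 \<le> CARD('a)"
    and "7 * CARD('a)\<^sup>2 + 4 * CARD('a) < 8 * card V + 12"
    and "CARD('a) = 4 \<or> 5 * CARD('a)\<^sup>2 + 3 * CARD('a) \<le> 6 * card V"
  shows "3 * (int CARD('a))\<^sup>2 - 12 < 4 * surplus"
    and "CARD('a) = 4 \<or> 2 * (int CARD('a))\<^sup>2 \<le> 3 * surplus"
    and "0 < surplus"
proof -
  have "int (7 * CARD('a)\<^sup>2 + 4 * CARD('a)) < int (8 * card V + 12)"
    using assms(2) by (simp only: of_nat_less_iff)
  then show large: "3 * (int CARD('a))\<^sup>2 - 12 < 4 * surplus"
    by (simp add: surplus_def)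
  show "CARD('a) = 4 \<or> 2 * (int CARD('a))\<^sup>2 \<le> 3 * surplus"
  proof (cases "CARD('a) = 4")
    case False
    then have "int (5 * CARD('a)\<^sup>2 + 3 * CARD('a)) \<le> int (6 * card V)"
      using assms(3) by (simp only: of_nat_le_iff) simp
    then have "5 * (int CARD('a))\<^sup>2 + 3 * int CARD('a) \<le> 6 * int (card V)"
      by simp
    then show ?thesis
      by (simp add: surplus_def)
  qed simp
  have "4\<^sup>2 \<le> (int CARD('a))\<^sup>2"
    using assms(1) by (intro power_mono) simp_all
  then show "0 < surplus"
    using large by simp
qed

theorem common_point:
  assumes "4 \<le> CARD('a)"
    and large1: "CARD('a)\<^sup>2 + 3 * CARD('a) < 2 * card V + 2"
    and large2: "7 * CARD('a)\<^sup>2 + 4 * CARD('a) < 8 * card V + 12"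
    and large3: "CARD('a) = 4 \<or> 5 * CARD('a)\<^sup>2 + 3 * CARD('a) \<le> 6 * card V"
  shows "\<exists>x y. \<forall>f\<in>V. poly f x = y"
proof (rule ccontr)
  assume no_common: "\<not> ?thesis"
  note surplus = surplus_bounds[OF assms(1) large2 large3]
  have "V \<noteq> {}"
    using large1 assms(1) by auto
  then obtain x y where "rich x y"
    using rich_point_exists surplus(3) by blast
  then obtain x\<^sub>0 y\<^sub>0 where "rich x\<^sub>0 y\<^sub>0"
    and richest: "\<And>x y. rich x y \<Longrightarrow> card (through x y) \<le> card (through x\<^sub>0 y\<^sub>0)"
    by (rule richest_point_exists) auto
  define M where "M = card (through x\<^sub>0 y\<^sub>0)"
  obtain g where "g \<in> V" and "poly g x\<^sub>0 \<noteq> y\<^sub>0"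
    using no_common by blast
  then have "4 * M + 4 \<le> CARD('a)\<^sup>2 + 4 * CARD('a)"
    unfolding M_def using large1 by (intro four_card_through_le)
  then have "int (4 * M + 4) \<le> int (CARD('a)\<^sup>2 + 4 * CARD('a))"
    by (simp only: of_nat_le_iff)
  then have "3 * (int M - int CARD('a)) < surplus"
    using surplus(1) by simp
  then have "(\<Sum>f\<in>through x\<^sub>0 y\<^sub>0. (CARD('a) - 1) * (CARD('a) - 2))
      < (\<Sum>f\<in>through x\<^sub>0 y\<^sub>0. M * (card (rich_abscissas f - {x\<^sub>0}) * (card (rich_abscissas f - {x\<^sub>0}) - 1)))"
    using assms(1) surplus(2) \<open>rich x\<^sub>0 y\<^sub>0\<close> richest finite_through unfolding M_def
    by (intro sum_strict_mono rich_pairs_lower) (auto simp: rich_def)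
  also have "\<dots> \<le> M * ((CARD('a) - 1) * (CARD('a) - 2))"
    using sum_card_rich_pairs_le[of x\<^sub>0 y\<^sub>0] by (simp add: sum_distrib_left[symmetric])
  finally show False
    by (simp add: M_def)
qed
end

section \<open>The size condition of the theorem\<close>

lemma sqrt_le_quarter:
  assumes "16 \<le> x"
  shows "sqrt x \<le> x / 4"
proof -
  have "x \<le> (x / 4)\<^sup>2"
    using assms by (simp add: power2_eq_square field_simps)
  then show ?thesis
    using assms by (intro real_le_lsqrt) simp_all
qed

lemma card_bounds_of_epsilon:
  fixes q N k :: nat and \<epsilon> :: real
  assumes "q = 2 ^ k" and "2 < q" and "real N = real q ^ 2 - \<epsilon>"
    and "\<epsilon> < real q * sqrt (real q) / 4 - real q / 8 - sqrt (real q) / 8"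
  shows "(q = 4 \<and> 15 \<le> N) \<or> (q = 8 \<and> 60 \<le> N) \<or> (16 \<le> q \<and> 15 * q\<^sup>2 < 16 * N)"
proof -
  have "1 < k"
  proof (rule ccontr)
    assume "\<not> 1 < k"
    then have "k = 0 \<or> k = 1"
      by auto
    then show False
      using assms(1,2) by auto
  qed
  then consider "k = 2" | "k = 3" | "4 \<le> k"
    by linarith
  then show ?thesis
  proof cases
    case 1
    then have "q = 4" and "sqrt (real q) = 2"
      using assms(1) real_sqrt_abs[of 2] by simp_all
    then have "real N > 59 / 4"
      using assms(3,4) by simp
    then show ?thesis
      using \<open>q = 4\<close> by simp
  next
    case 2
    then have "q = 8"
      using assms(1) by simp
    have "sqrt (real q) < 3"
      using real_sqrt_less_mono[of 8 9] real_sqrt_abs[of 3] \<open>q = 8\<close> by simp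
    then have "real N > 64 - 37 / 8"
      using assms(3,4) \<open>q = 8\<close> by simp
    then show ?thesis
      using \<open>q = 8\<close> by simp
  next
    case 3
    then have "16 \<le> q"
      using assms(1) power_increasing[of 4 k "2::nat"] by simp
    then have "sqrt (real q) \<le> real q / 4"
      by (intro sqrt_le_quarter) simp
    then have "real q * sqrt (real q) \<le> real q * (real q / 4)"
      by (rule mult_left_mono) simp
    then have "real q * sqrt (real q) / 4 \<le> (real q)\<^sup>2 / 16"
      by (simp add: power2_eq_square)
    moreover have "\<epsilon> < real q * sqrt (real q) / 4"
      using assms(4) real_sqrt_ge_zero[of "real q"] by linarith
    ultimately have "\<epsilon> < (real q)\<^sup>2 / 16"
      by linarith
    then have "real (15 * q\<^sup>2) < real (16 * N)"
      using assms(3) by simp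
    then show ?thesis
      using \<open>16 \<le> q\<close> by (simp only: of_nat_less_iff) simp
  qed
qed

lemma large_family_conditions:
  fixes q N :: nat
  assumes "(q = 4 \<and> 15 \<le> N) \<or> (q = 8 \<and> 60 \<le> N) \<or> (16 \<le> q \<and> 15 * q\<^sup>2 < 16 * N)"
  shows "4 \<le> q" and "q\<^sup>2 + 3 * q < 2 * N + 2" and "7 * q\<^sup>2 + 4 * q < 8 * N + 12"
    and "q = 4 \<or> 5 * q\<^sup>2 + 3 * q \<le> 6 * N"
proof -
  have "16 \<le> q \<Longrightarrow> 16 * q \<le> q\<^sup>2"
    by (simp add: power2_eq_square)
  then show "4 \<le> q" and "q\<^sup>2 + 3 * q < 2 * N + 2" and "7 * q\<^sup>2 + 4 * q < 8 * N + 12"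
    and "q = 4 \<or> 5 * q\<^sup>2 + 3 * q \<le> 6 * N"
    using assms by auto
qed

theorem theorem5:
  fixes U :: "('a::{finite,field}) poly set" and q :: nat and \<epsilon> :: real
  assumes "CARD('a) = q"
    and "\<exists>k. q = 2 ^ k"
    and "q > 2"
    and "\<forall>f\<in>U. degree f \<le> 2"
    and "intersecting U"
    and "real (card U) = real q ^ 2 - \<epsilon>"
    and "\<epsilon> < real q * sqrt (real q) / 4 - real q / 8 - sqrt (real q) / 8"
  shows "\<exists>P. \<forall>f\<in>U. P \<in> poly_graph f"
proof -
  obtain k where k: "q = 2 ^ k"
    using assms(2) by blast
  moreover have "k \<noteq> 0"
  proof
    assume "k = 0"
    then show False
      using k assms(3) by simp
  qed
  ultimately have "(2::'a) = 0"
    using assms(1) by (intro char_two_if_card_power_two[of k]) auto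
  then interpret intersecting_quadratics U
    using assms(4,5) by unfold_locales auto
  have bounds: "(q = 4 \<and> 15 \<le> card U) \<or> (q = 8 \<and> 60 \<le> card U) \<or> (16 \<le> q \<and> 15 * q\<^sup>2 < 16 * card U)"
    using k assms(3,6,7) by (rule card_bounds_of_epsilon)
  have "\<exists>x y. \<forall>f\<in>U. poly f x = y"
    using large_family_conditions[OF bounds] assms(1) by (intro common_point) simp_all
  then obtain x y where "\<forall>f\<in>U. poly f x = y"
    by blast
  then have "\<forall>f\<in>U. (x, y) \<in> poly_graph f"
    by (auto simp: poly_graph_def)
  then show ?thesis
    by blast
qed

end
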